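(* Let $a<b$ be real numbers and let $C[a,b]$ be the space of real continuous functions on $[a,b]$ with the norm $\|x\|=\sup_{t\in[a,b]}|x(t)|$; let $\ell_1$ be the space of real sequences with $\|x\|_1=\sum_i|x_i|<\infty$, and $\ell_\infty$ the space of bounded real sequences with $\|x\|_\infty=\sup_n|x_n|$. Then $S_P(C[a,b])=S_P(\ell_1)=S_P(\ell_\infty)=\tfrac12$; consequently none of $C[a,b]$, $\ell_1$, $\ell_\infty$ is uniformly non-square.
   Context: For a real Banach space $X$ with unit sphere $S_X$, the P-angle constant is $S_P(X)=\sup\left\{\frac{\|x+y\|^2+\|x-y\|^2-4}{2\|x+y\|\,\|x-y\|}: x,y\in S_X,\ x\neq \pm y\right\}$. $X$ is uniformly non-square if there exists $\delta\in(0,1)$ such that for all $x,y\in S_X$, either $\frac{\|x-y\|}{2}\le 1-\delta$ or $\frac{\|x+y\|}{2}\le 1-\delta$. *)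

theory Defs
  imports "HOL-Analysis.Analysis" "HOL-Library.Function_Algebras"
begin

text \<open>A normed space is given concretely by a carrier V (a linear subspace of some
  real vector space of functions) and a norm function N on it.\<close>

definition P_angle_constant :: "'a::ab_group_add set \<Rightarrow> ('a \<Rightarrow> real) \<Rightarrow> real" where
  "P_angle_constant V N = Sup {((N (x + y))^2 + (N (x - y))^2 - 4) / (2 * N (x + y) * N (x - y)) | x y.
      x \<in> V \<and> y \<in> V \<and> N x = 1 \<and> N y = 1 \<and> x \<noteq> y \<and> x \<noteq> - y}"

definition uniformly_non_square :: "'a::ab_group_add set \<Rightarrow> ('a \<Rightarrow> real) \<Rightarrow> bool" where
  "uniformly_non_square V N \<longleftrightarrow> (\<exists>\<delta>. 0 < \<delta> \<and> \<delta> < 1 \<and>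
     (\<forall>x\<in>V. \<forall>y\<in>V. N x = 1 \<longrightarrow> N y = 1 \<longrightarrow>
        N (x - y) / 2 \<le> 1 - \<delta> \<or> N (x + y) / 2 \<le> 1 - \<delta>))"

text \<open>C[a,b]: continuous functions on [a,b], normalised to 0 outside [a,b]
  so that equality of elements is equality on [a,b].\<close>
definition Cab :: "real \<Rightarrow> real \<Rightarrow> (real \<Rightarrow> real) set" where
  "Cab a b = {f. continuous_on {a..b} f \<and> (\<forall>t. t \<notin> {a..b} \<longrightarrow> f t = 0)}"

definition sup_norm_ab :: "real \<Rightarrow> real \<Rightarrow> (real \<Rightarrow> real) \<Rightarrow> real" where
  "sup_norm_ab a b f = Sup ((\<lambda>t. \<bar>f t\<bar>) ` {a..b})"

definition ell1 :: "(nat \<Rightarrow> real) set" where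
  "ell1 = {x. summable (\<lambda>i. \<bar>x i\<bar>)}"

definition norm_ell1 :: "(nat \<Rightarrow> real) \<Rightarrow> real" where
  "norm_ell1 x = (\<Sum>i. \<bar>x i\<bar>)"

definition ellinf :: "(nat \<Rightarrow> real) set" where
  "ellinf = {x. bounded (range x)}"

definition norm_ellinf :: "(nat \<Rightarrow> real) \<Rightarrow> real" where
  "norm_ellinf x = Sup (range (\<lambda>n. \<bar>x n\<bar>))"

end

theory Submission
  imports Defs
begin

text \<open>If \<open>\<parallel>x\<parallel> = \<parallel>y\<parallel> = 1\<close> then \<open>p = \<parallel>x + y\<parallel>\<close> and \<open>q = \<parallel>x - y\<parallel>\<close> lie in \<open>[0, 2]\<close>, and
  \<open>(2 - p)(2 - q) \<ge> 0\<close>, \<open>p(2 - p) \<ge> 0\<close>, \<open>q(2 - q) \<ge> 0\<close> add up to \<open>p\<^sup>2 + q\<^sup>2 - 4 \<le> p q\<close>; so the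
  P-angle quotient never exceeds \<open>1/2\<close>. The bound is attained exactly when \<open>p = q = 2\<close>,
  and \<open>C[a,b]\<close>, \<open>\<ell>\<^sub>1\<close>, \<open>\<ell>\<^sub>\<infinity>\<close> all contain such a pair of unit vectors: \<open>1, (2t - a - b)/(b - a)\<close>,
  \<open>e\<^sub>0, e\<^sub>1\<close> and \<open>(1,1,1,\<dots>), (1,-1,-1,\<dots>)\<close>. The same pair violates uniform non-squareness.\<close>

lemma P_angle_quotient_le_half:
  fixes p q :: real
  assumes "0 \<le> p" "0 \<le> q" "p \<le> 2" "q \<le> 2"
  shows "(p\<^sup>2 + q\<^sup>2 - 4) / (2 * p * q) \<le> 1/2"
proof (cases "p * q = 0")
  case True
  then have "2 * p * q = 0" by simp
  then have "(p\<^sup>2 + q\<^sup>2 - 4) / (2 * p * q) = 0"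
    by (simp only: division_ring_divide_zero)
  then show ?thesis by linarith
next
  case False
  then have "p * q > 0" using assms by (simp add: less_le)
  moreover have "(2 - p) * (2 - q) \<ge> 0" "p * (2 - p) \<ge> 0" "q * (2 - q) \<ge> 0"
    using assms by auto
  then have "p\<^sup>2 + q\<^sup>2 - 4 \<le> p * q" by (simp add: algebra_simps power2_eq_square)
  ultimately show ?thesis by (simp add: divide_simps)
qed

definition square_pair :: "'a::ab_group_add set \<Rightarrow> ('a \<Rightarrow> real) \<Rightarrow> 'a \<Rightarrow> 'a \<Rightarrow> bool" where
  "square_pair V N x y \<longleftrightarrow> x \<in> V \<and> y \<in> V \<and> N x = 1 \<and> N y = 1 \<and> N (x + y) = 2 \<and> N (x - y) = 2"

lemma not_uniformly_non_square_if_square_pair: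
  assumes "square_pair V N x y"
  shows "\<not> uniformly_non_square V N"
  using assms unfolding square_pair_def uniformly_non_square_def by force

lemma P_angle_constant_eq_half:
  fixes V :: "'a::ab_group_add set" and N :: "'a \<Rightarrow> real"
  assumes nonneg: "\<And>x. x \<in> V \<Longrightarrow> 0 \<le> N x"
    and add_closed: "\<And>x y. x \<in> V \<Longrightarrow> y \<in> V \<Longrightarrow> x + y \<in> V"
    and diff_closed: "\<And>x y. x \<in> V \<Longrightarrow> y \<in> V \<Longrightarrow> x - y \<in> V"
    and triangle_add: "\<And>x y. x \<in> V \<Longrightarrow> y \<in> V \<Longrightarrow> N (x + y) \<le> N x + N y"
    and triangle_diff: "\<And>x y. x \<in> V \<Longrightarrow> y \<in> V \<Longrightarrow> N (x - y) \<le> N x + N y"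
    and zero: "N 0 = 0"
    and square: "square_pair V N x\<^sub>0 y\<^sub>0"
  shows "P_angle_constant V N = 1/2"
proof -
  let ?Q = "\<lambda>x y. ((N (x + y))\<^sup>2 + (N (x - y))\<^sup>2 - 4) / (2 * N (x + y) * N (x - y))"
  let ?S = "{?Q x y | x y. x \<in> V \<and> y \<in> V \<and> N x = 1 \<and> N y = 1 \<and> x \<noteq> y \<and> x \<noteq> - y}"
  have sq: "x\<^sub>0 \<in> V" "y\<^sub>0 \<in> V" "N x\<^sub>0 = 1" "N y\<^sub>0 = 1" "N (x\<^sub>0 + y\<^sub>0) = 2" "N (x\<^sub>0 - y\<^sub>0) = 2"
    using square unfolding square_pair_def by auto
  have "x\<^sub>0 \<noteq> y\<^sub>0" "x\<^sub>0 \<noteq> - y\<^sub>0"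
    using sq(5,6) zero by (auto simp: add_eq_0_iff2)
  with sq have half_mem: "1/2 \<in> ?S"
    by (intro CollectI exI[of _ x\<^sub>0] exI[of _ y\<^sub>0]) simp
  have "z \<le> 1/2" if "z \<in> ?S" for z
  proof -
    from that obtain x y where z: "z = ?Q x y" and xy: "x \<in> V" "y \<in> V" "N x = 1" "N y = 1"
      by blast
    show ?thesis
      unfolding z using xy nonneg add_closed diff_closed triangle_add[OF xy(1,2)]
        triangle_diff[OF xy(1,2)]
      by (intro P_angle_quotient_le_half) auto
  qed
  with half_mem show ?thesis
    unfolding P_angle_constant_def by (intro cSup_eq_maximum) auto
qed

lemma Cab_add: "f \<in> Cab a b \<Longrightarrow> g \<in> Cab a b \<Longrightarrow> f + g \<in> Cab a b"
  and Cab_diff: "f \<in> Cab a b \<Longrightarrow> g \<in> Cab a b \<Longrightarrow> f - g \<in> Cab a b"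
  unfolding Cab_def by (auto intro: continuous_intros)

lemma abs_le_sup_norm_ab:
  assumes "f \<in> Cab a b" "t \<in> {a..b}"
  shows "\<bar>f t\<bar> \<le> sup_norm_ab a b f"
proof -
  have "continuous_on {a..b} (\<lambda>t. \<bar>f t\<bar>)"
    using assms(1) unfolding Cab_def by (auto intro: continuous_intros)
  then have "bdd_above ((\<lambda>t. \<bar>f t\<bar>) ` {a..b})"
    by (intro bounded_imp_bdd_above compact_imp_bounded compact_continuous_image) auto
  then show ?thesis
    unfolding sup_norm_ab_def using assms(2) by (intro cSup_upper) auto
qed

lemma sup_norm_ab_le:
  assumes "a \<le> b" "\<And>t. t \<in> {a..b} \<Longrightarrow> \<bar>f t\<bar> \<le> c"
  shows "sup_norm_ab a b f \<le> c"
  unfolding sup_norm_ab_def using assms by (intro cSup_least) auto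

lemma sup_norm_ab_eqI:
  assumes "s \<in> {a..b}" "\<bar>f s\<bar> = c" "\<And>t. t \<in> {a..b} \<Longrightarrow> \<bar>f t\<bar> \<le> c"
  shows "sup_norm_ab a b f = c"
  unfolding sup_norm_ab_def using assms by (intro cSup_eq_maximum) force+

lemma sup_norm_ab_nonneg: "a \<le> b \<Longrightarrow> f \<in> Cab a b \<Longrightarrow> 0 \<le> sup_norm_ab a b f"
  using abs_le_sup_norm_ab[of f a b a] by force

lemma sup_norm_ab_triangle_add:
  assumes "a \<le> b" "f \<in> Cab a b" "g \<in> Cab a b"
  shows "sup_norm_ab a b (f + g) \<le> sup_norm_ab a b f + sup_norm_ab a b g"
  using assms abs_le_sup_norm_ab[OF assms(2)] abs_le_sup_norm_ab[OF assms(3)]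
  by (intro sup_norm_ab_le) (auto intro: abs_triangle_ineq[THEN order_trans] add_mono)

lemma sup_norm_ab_triangle_diff:
  assumes "a \<le> b" "f \<in> Cab a b" "g \<in> Cab a b"
  shows "sup_norm_ab a b (f - g) \<le> sup_norm_ab a b f + sup_norm_ab a b g"
  using assms abs_le_sup_norm_ab[OF assms(2)] abs_le_sup_norm_ab[OF assms(3)]
  by (intro sup_norm_ab_le) (auto intro: abs_triangle_ineq4[THEN order_trans] add_mono)

lemma sup_norm_ab_zero: "a \<le> b \<Longrightarrow> sup_norm_ab a b 0 = 0"
  by (rule sup_norm_ab_eqI[of a]) auto

lemma Cab_square_pair:
  assumes "a < b"
  shows "square_pair (Cab a b) (sup_norm_ab a b)
           (\<lambda>t. if t \<in> {a..b} then 1 else 0)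
           (\<lambda>t. if t \<in> {a..b} then 2 * ((t - a) / (b - a)) - 1 else 0)"
    (is "square_pair _ _ ?x ?y")
proof -
  have ab: "a \<in> {a..b}" "b \<in> {a..b}" using assms by auto
  have y_bound: "\<bar>2 * ((t - a) / (b - a)) - 1\<bar> \<le> 1"
    and y_bound_add: "\<bar>1 + (2 * ((t - a) / (b - a)) - 1)\<bar> \<le> 2"
    and y_bound_diff: "\<bar>1 - (2 * ((t - a) / (b - a)) - 1)\<bar> \<le> 2"
    if "t \<in> {a..b}" for t
  proof -
    have "0 \<le> (t - a) / (b - a)" "(t - a) / (b - a) \<le> 1"
      using assms that by (auto simp: divide_simps)
    then show "\<bar>2 * ((t - a) / (b - a)) - 1\<bar> \<le> 1"
      "\<bar>1 + (2 * ((t - a) / (b - a)) - 1)\<bar> \<le> 2"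
      "\<bar>1 - (2 * ((t - a) / (b - a)) - 1)\<bar> \<le> 2"
      by linarith+
  qed
  have "continuous_on {a..b} ?x"
    by (rule continuous_on_eq[of _ "\<lambda>t. 1"]) auto
  moreover have "continuous_on {a..b} ?y"
    by (rule continuous_on_eq[of _ "\<lambda>t. 2 * ((t - a) / (b - a)) - 1"])
      (use assms in \<open>auto intro!: continuous_intros\<close>)
  ultimately have "?x \<in> Cab a b" "?y \<in> Cab a b" by (auto simp: Cab_def)
  moreover have "sup_norm_ab a b ?x = 1"
    by (rule sup_norm_ab_eqI[OF ab(1)]) (use ab in auto)
  moreover have "sup_norm_ab a b ?y = 1"
    by (rule sup_norm_ab_eqI[OF ab(1)]) (use ab y_bound in auto)
  moreover have "sup_norm_ab a b (?x + ?y) = 2"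
    by (rule sup_norm_ab_eqI[OF ab(2)]) (use ab assms y_bound_add in auto)
  moreover have "sup_norm_ab a b (?x - ?y) = 2"
    by (rule sup_norm_ab_eqI[OF ab(1)]) (use ab y_bound_diff in auto)
  ultimately show ?thesis unfolding square_pair_def by blast
qed

lemma ell1_pointwise_bound:
  assumes "x \<in> ell1" "y \<in> ell1" "\<And>i. \<bar>z i\<bar> \<le> \<bar>x i\<bar> + \<bar>y i\<bar>"
  shows "z \<in> ell1"
proof -
  have "summable (\<lambda>i. \<bar>x i\<bar> + \<bar>y i\<bar>)"
    using assms(1,2) by (auto simp: ell1_def intro: summable_add)
  then show ?thesis
    unfolding ell1_def using assms(3) by (auto intro: summable_comparison_test'[where N = 0])
qed

lemma ell1_add: "x \<in> ell1 \<Longrightarrow> y \<in> ell1 \<Longrightarrow> x + y \<in> ell1"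
  and ell1_diff: "x \<in> ell1 \<Longrightarrow> y \<in> ell1 \<Longrightarrow> x - y \<in> ell1"
  by (rule ell1_pointwise_bound[of x y]; simp add: abs_triangle_ineq abs_triangle_ineq4)+

lemma norm_ell1_nonneg: "x \<in> ell1 \<Longrightarrow> 0 \<le> norm_ell1 x"
  unfolding ell1_def norm_ell1_def by (auto intro: suminf_nonneg)

lemma norm_ell1_le_pointwise:
  assumes "x \<in> ell1" "y \<in> ell1" "\<And>i. \<bar>z i\<bar> \<le> \<bar>x i\<bar> + \<bar>y i\<bar>"
  shows "norm_ell1 z \<le> norm_ell1 x + norm_ell1 y"
proof -
  have "z \<in> ell1" using ell1_pointwise_bound[OF assms] .
  with assms(1,2) have "summable (\<lambda>i. \<bar>x i\<bar>)" "summable (\<lambda>i. \<bar>y i\<bar>)" "summable (\<lambda>i. \<bar>z i\<bar>)"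
    by (simp_all add: ell1_def)
  then have "(\<Sum>i. \<bar>z i\<bar>) \<le> (\<Sum>i. \<bar>x i\<bar> + \<bar>y i\<bar>)"
    by (intro suminf_le summable_add) (use assms(3) in auto)
  also have "\<dots> = norm_ell1 x + norm_ell1 y"
    unfolding norm_ell1_def by (rule suminf_add[symmetric]) fact+
  finally show ?thesis unfolding norm_ell1_def .
qed

lemma norm_ell1_triangle_add: "x \<in> ell1 \<Longrightarrow> y \<in> ell1 \<Longrightarrow> norm_ell1 (x + y) \<le> norm_ell1 x + norm_ell1 y"
  by (intro norm_ell1_le_pointwise) (auto intro: abs_triangle_ineq)

lemma norm_ell1_triangle_diff: "x \<in> ell1 \<Longrightarrow> y \<in> ell1 \<Longrightarrow> norm_ell1 (x - y) \<le> norm_ell1 x + norm_ell1 y"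
  by (intro norm_ell1_le_pointwise) (auto intro: abs_triangle_ineq4)

lemma norm_ell1_zero: "norm_ell1 0 = 0"
  by (simp add: norm_ell1_def)

lemma ell1_finite_support:
  assumes "finite I" "\<And>i. i \<notin> I \<Longrightarrow> x i = 0"
  shows "x \<in> ell1" "norm_ell1 x = (\<Sum>i\<in>I. \<bar>x i\<bar>)"
  using assms summable_finite[of I "\<lambda>i. \<bar>x i\<bar>"] suminf_finite[of I "\<lambda>i. \<bar>x i\<bar>"]
  by (auto simp: ell1_def norm_ell1_def)

lemma ell1_square_pair:
  "square_pair ell1 norm_ell1 (\<lambda>i. if i = 0 then 1 else 0) (\<lambda>i. if i = 1 then 1 else 0)"
    (is "square_pair _ _ ?x ?y")
proof -
  have "finite {0, 1 :: nat}" by simp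
  moreover have "i \<notin> {0, 1} \<Longrightarrow> z i = 0" if "z \<in> {?x, ?y, ?x + ?y, ?x - ?y}" for z i
    using that by auto
  ultimately have "z \<in> ell1 \<and> norm_ell1 z = \<bar>z 0\<bar> + \<bar>z 1\<bar>" if "z \<in> {?x, ?y, ?x + ?y, ?x - ?y}" for z
    using ell1_finite_support[of "{0, 1}" z] that by simp
  then show ?thesis
    unfolding square_pair_def by simp
qed

lemma ellinf_iff: "x \<in> ellinf \<longleftrightarrow> (\<exists>B. \<forall>n. \<bar>x n\<bar> \<le> B)"
  unfolding ellinf_def bounded_iff by auto

lemma ellinf_pointwise_bound:
  assumes "x \<in> ellinf" "y \<in> ellinf" "\<And>n. \<bar>z n\<bar> \<le> \<bar>x n\<bar> + \<bar>y n\<bar>"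
  shows "z \<in> ellinf"
proof -
  from assms(1,2) obtain B C where "\<forall>n. \<bar>x n\<bar> \<le> B" "\<forall>n. \<bar>y n\<bar> \<le> C"
    unfolding ellinf_iff by blast
  with assms(3) have "\<forall>n. \<bar>z n\<bar> \<le> B + C" by (meson add_mono order_trans)
  then show ?thesis unfolding ellinf_iff by blast
qed

lemma ellinf_add: "x \<in> ellinf \<Longrightarrow> y \<in> ellinf \<Longrightarrow> x + y \<in> ellinf"
  and ellinf_diff: "x \<in> ellinf \<Longrightarrow> y \<in> ellinf \<Longrightarrow> x - y \<in> ellinf"
  by (rule ellinf_pointwise_bound[of x y]; simp add: abs_triangle_ineq abs_triangle_ineq4)+

lemma abs_le_norm_ellinf:
  assumes "x \<in> ellinf"
  shows "\<bar>x n\<bar> \<le> norm_ellinf x"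
proof -
  from assms obtain B where "\<forall>n. \<bar>x n\<bar> \<le> B" unfolding ellinf_iff by blast
  then have "bdd_above (range (\<lambda>n. \<bar>x n\<bar>))" by (auto intro: bdd_aboveI)
  then show ?thesis unfolding norm_ellinf_def by (intro cSup_upper) auto
qed

lemma norm_ellinf_le: "(\<And>n. \<bar>x n\<bar> \<le> c) \<Longrightarrow> norm_ellinf x \<le> c"
  unfolding norm_ellinf_def by (intro cSup_least) auto

lemma norm_ellinf_eqI: "\<bar>x k\<bar> = c \<Longrightarrow> (\<And>n. \<bar>x n\<bar> \<le> c) \<Longrightarrow> norm_ellinf x = c"
  unfolding norm_ellinf_def by (intro cSup_eq_maximum) auto

lemma norm_ellinf_nonneg: "x \<in> ellinf \<Longrightarrow> 0 \<le> norm_ellinf x"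
  using abs_le_norm_ellinf[of x 0] by linarith

lemma norm_ellinf_triangle_add:
  "x \<in> ellinf \<Longrightarrow> y \<in> ellinf \<Longrightarrow> norm_ellinf (x + y) \<le> norm_ellinf x + norm_ellinf y"
  by (intro norm_ellinf_le)
    (auto intro: abs_triangle_ineq[THEN order_trans] add_mono abs_le_norm_ellinf)

lemma norm_ellinf_triangle_diff:
  "x \<in> ellinf \<Longrightarrow> y \<in> ellinf \<Longrightarrow> norm_ellinf (x - y) \<le> norm_ellinf x + norm_ellinf y"
  by (intro norm_ellinf_le)
    (auto intro: abs_triangle_ineq4[THEN order_trans] add_mono abs_le_norm_ellinf)

lemma norm_ellinf_zero: "norm_ellinf 0 = 0"
  by (rule norm_ellinf_eqI[of _ 0]) auto

lemma ellinf_square_pair: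
  "square_pair ellinf norm_ellinf (\<lambda>i. 1) (\<lambda>i. if i = 0 then 1 else -1)"
proof -
  have "(\<lambda>i. 1) \<in> ellinf" "(\<lambda>i. if i = 0 then 1 else -1) \<in> ellinf"
    unfolding ellinf_iff by (auto intro!: exI[of _ 1])
  moreover have "norm_ellinf (\<lambda>i. 1) = 1"
    by (rule norm_ellinf_eqI[of _ 0]) auto
  moreover have "norm_ellinf (\<lambda>i::nat. if i = 0 then 1 else -1) = 1"
    by (rule norm_ellinf_eqI[of _ 0]) auto
  moreover have "norm_ellinf ((\<lambda>i. 1) + (\<lambda>i::nat. if i = 0 then 1 else -1)) = 2"
    by (rule norm_ellinf_eqI[of _ 0]) auto
  moreover have "norm_ellinf ((\<lambda>i. 1) - (\<lambda>i::nat. if i = 0 then 1 else -1)) = 2"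
    by (rule norm_ellinf_eqI[of _ 1]) auto
  ultimately show ?thesis unfolding square_pair_def by blast
qed

theorem mainTheorem13:
  fixes a b :: real
  assumes "a < b"
  shows "P_angle_constant (Cab a b) (sup_norm_ab a b) = 1/2
       \<and> P_angle_constant ell1 norm_ell1 = 1/2
       \<and> P_angle_constant ellinf norm_ellinf = 1/2
       \<and> \<not> uniformly_non_square (Cab a b) (sup_norm_ab a b)
       \<and> \<not> uniformly_non_square ell1 norm_ell1
       \<and> \<not> uniformly_non_square ellinf norm_ellinf"
proof -
  have "a \<le> b" using assms by simp
  have "P_angle_constant (Cab a b) (sup_norm_ab a b) = 1/2"
    by (rule P_angle_constant_eq_half[OF sup_norm_ab_nonneg[OF \<open>a \<le> b\<close>] Cab_add Cab_diff
          sup_norm_ab_triangle_add[OF \<open>a \<le> b\<close>] sup_norm_ab_triangle_diff[OF \<open>a \<le> b\<close>]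
          sup_norm_ab_zero[OF \<open>a \<le> b\<close>] Cab_square_pair[OF assms]])
  moreover have "P_angle_constant ell1 norm_ell1 = 1/2"
    by (rule P_angle_constant_eq_half[OF norm_ell1_nonneg ell1_add ell1_diff
          norm_ell1_triangle_add norm_ell1_triangle_diff norm_ell1_zero ell1_square_pair])
  moreover have "P_angle_constant ellinf norm_ellinf = 1/2"
    by (rule P_angle_constant_eq_half[OF norm_ellinf_nonneg ellinf_add ellinf_diff
          norm_ellinf_triangle_add norm_ellinf_triangle_diff norm_ellinf_zero ellinf_square_pair])
  ultimately show ?thesis
    using not_uniformly_non_square_if_square_pair[OF Cab_square_pair[OF assms]]
      not_uniformly_non_square_if_square_pair[OF ell1_square_pair]
      not_uniformly_non_square_if_square_pair[OF ellinf_square_pair]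
    by blast
qed

end
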